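(* There is $C=C(\delta)<\infty$ such that the following holds in the setting described in the context: for any $i\in[k]$ there exists a set $V_i'\subseteq V_i$ with $|V_i'|\ge\delta^4n/80$ such that for every $v\in V_i'$, the random walk on $G^\rho$ started at $v$ satisfies \[ \Pr_v(\tau_\rho<\tau_{V\setminus V_i})\ge 1-C\varepsilon^2 . \]
   Context: Setting: $\delta\in(0,1]$, $\varepsilon>0$, $G=(V,E)$ is a connected simple graph on $n$ vertices with minimal degree at least $\delta n$, and $V=V_1\sqcup\dots\sqcup V_k$ is an $(\varepsilon,\delta,n^{1.5})$-good decomposition with parameter $\theta$; moreover $\sqrt n>1/(\theta\varepsilon^8)$. Here, writing $\deg(v,U)$ for the number of edges from $v$ to $U$ and $E(A,B)$ for edges between $A,B$, an $(\varepsilon,\delta,\beta)$-good decomposition with parameter $\theta\in[\varepsilon^{11\cdot2^{2/\delta}},\varepsilon]$ means: $k\le2/\delta$; $|V_i|\ge\delta n/2$; the spectral gap ($1-\lambda_2$ of the simple random walk transition matrix) of the induced graph $G[V_i]$ is at least $\frac{\delta^{15}\theta\beta}{2^{31}n^2}$; $\deg(v,V_i)\ge\delta^4n/40$ for $v\in V_i$; $|E(V_i,V\setminus V_i)|\le\varepsilon^9\theta^2\beta$, for all $i$. $G^\rho$ is the network obtained from $G$ (edges of weight 1) by adding a vertex $\rho$ joined to every $v\in V$ by an edge of weight $w(v,\rho)=\frac{\theta\varepsilon^4\deg_G(v)}{\sqrt n-\theta\varepsilon^4}$; the random walk moves along edges with probability proportional to their weights. For a set $A$, $\tau_A$ is the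 hitting time of $A$, and $\tau_\rho=\tau_{\{\rho\}}$. *)

theory Defs
  imports Complex_Main "HOL-Library.Multiset" "Jordan_Normal_Form.Char_Poly"
begin

definition simple_graph :: "nat set \<Rightarrow> (nat \<Rightarrow> nat \<Rightarrow> bool) \<Rightarrow> bool" where
  "simple_graph V E \<longleftrightarrow> finite V \<and> (\<forall>u v. E u v \<longrightarrow> u \<in> V \<and> v \<in> V)
     \<and> (\<forall>u v. E u v \<longrightarrow> E v u) \<and> (\<forall>u. \<not> E u u)"

definition connected_graph :: "nat set \<Rightarrow> (nat \<Rightarrow> nat \<Rightarrow> bool) \<Rightarrow> bool" where
  "connected_graph V E \<longleftrightarrow> (\<forall>u\<in>V. \<forall>v\<in>V. E\<^sup>*\<^sup>* u v)"

definition deg :: "(nat \<Rightarrow> nat \<Rightarrow> bool) \<Rightarrow> nat \<Rightarrow> nat set \<Rightarrow> nat" where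
  "deg E v U = card {u \<in> U. E v u}"

definition edges_between :: "(nat \<Rightarrow> nat \<Rightarrow> bool) \<Rightarrow> nat set \<Rightarrow> nat set \<Rightarrow> nat" where
  "edges_between E A B = card {(a, b). a \<in> A \<and> b \<in> B \<and> E a b}"

(* transition matrix of the simple random walk on the induced graph G[U],
   vertices of U enumerated in increasing order *)
definition srw_matrix :: "(nat \<Rightarrow> nat \<Rightarrow> bool) \<Rightarrow> nat set \<Rightarrow> real mat" where
  "srw_matrix E U = (let xs = sorted_list_of_set U in
     mat (length xs) (length xs)
       (\<lambda>(a, b). if E (xs ! a) (xs ! b) then 1 / real (deg E (xs ! a) U) else 0))"

(* multiset of (real) eigenvalues, counted with algebraic multiplicity *)
definition eig_mset :: "real mat \<Rightarrow> real multiset" where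
  "eig_mset A = Abs_multiset (\<lambda>x. order x (char_poly A))"

definition lambda2 :: "real mat \<Rightarrow> real" where
  "lambda2 A = rev (sorted_list_of_multiset (eig_mset A)) ! 1"

definition spectral_gap :: "(nat \<Rightarrow> nat \<Rightarrow> bool) \<Rightarrow> nat set \<Rightarrow> real" where
  "spectral_gap E U = 1 - lambda2 (srw_matrix E U)"

definition good_decomposition ::
  "real \<Rightarrow> real \<Rightarrow> real \<Rightarrow> real \<Rightarrow> nat set \<Rightarrow> (nat \<Rightarrow> nat \<Rightarrow> bool) \<Rightarrow> nat \<Rightarrow> (nat \<Rightarrow> nat set) \<Rightarrow> bool" where
  "good_decomposition \<epsilon> \<delta> \<beta> \<theta> V E k Vs \<longleftrightarrow>
     (let n = real (card V) in
     \<epsilon> powr (11 * 2 powr (2 / \<delta>)) \<le> \<theta> \<and> \<theta> \<le> \<epsilon> \<and>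
     (\<Union>i<k. Vs i) = V \<and> (\<forall>i<k. \<forall>j<k. i \<noteq> j \<longrightarrow> Vs i \<inter> Vs j = {}) \<and>
     real k \<le> 2 / \<delta> \<and>
     (\<forall>i<k. real (card (Vs i)) \<ge> \<delta> * n / 2 \<and>
        spectral_gap E (Vs i) \<ge> \<delta>^15 * \<theta> * \<beta> / (2^31 * n^2) \<and>
        (\<forall>v\<in>Vs i. real (deg E v (Vs i)) \<ge> \<delta>^4 * n / 40) \<and>
        real (edges_between E (Vs i) (V - Vs i)) \<le> \<epsilon>^9 * \<theta>^2 * \<beta>))"

definition walk_P :: "('s \<Rightarrow> 's \<Rightarrow> real) \<Rightarrow> 's set \<Rightarrow> 's \<Rightarrow> 's \<Rightarrow> real" where
  "walk_P w S x y = w x y / (\<Sum>z\<in>S. w x z)"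

(* probability, started at x, that the walk hits a at some time t' \<le> t and has
   not visited B at times 0..t' (i.e. tau_a \<le> t and tau_a < tau_B) *)
fun hit_within :: "('s \<Rightarrow> 's \<Rightarrow> real) \<Rightarrow> 's set \<Rightarrow> 's \<Rightarrow> 's set \<Rightarrow> nat \<Rightarrow> 's \<Rightarrow> real" where
  "hit_within P S a B 0 x = (if x \<in> B then 0 else if x = a then 1 else 0)"
| "hit_within P S a B (Suc t) x = (if x \<in> B then 0 else if x = a then 1
      else (\<Sum>y\<in>S. P x y * hit_within P S a B t y))"

(* Pr_x(tau_a < tau_B) = lim_t Pr_x(tau_a \<le> t, tau_a < tau_B) *)
definition hit_before :: "('s \<Rightarrow> 's \<Rightarrow> real) \<Rightarrow> 's set \<Rightarrow> 's \<Rightarrow> 's set \<Rightarrow> 's \<Rightarrow> real" where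
  "hit_before P S a B x = (SUP t. hit_within P S a B t x)"

(* The network G^rho: states Some v (v \<in> V) and rho = None *)
definition rho_states :: "nat set \<Rightarrow> nat option set" where
  "rho_states V = insert None (Some ` V)"

definition rho_weight ::
  "real \<Rightarrow> real \<Rightarrow> nat set \<Rightarrow> (nat \<Rightarrow> nat \<Rightarrow> bool) \<Rightarrow> nat option \<Rightarrow> nat option \<Rightarrow> real" where
  "rho_weight \<epsilon> \<theta> V E x y =
     (let n = real (card V);
          c = \<theta> * \<epsilon>^4 / (sqrt n - \<theta> * \<epsilon>^4) in
      case (x, y) of
        (Some u, Some v) \<Rightarrow> (if E u v then 1 else 0)
      | (Some u, None) \<Rightarrow> c * real (deg E u V)
      | (None, Some v) \<Rightarrow> c * real (deg E v V)
      | (None, None) \<Rightarrow> 0)"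

definition rho_P :: "real \<Rightarrow> real \<Rightarrow> nat set \<Rightarrow> (nat \<Rightarrow> nat \<Rightarrow> bool) \<Rightarrow> nat option \<Rightarrow> nat option \<Rightarrow> real" where
  "rho_P \<epsilon> \<theta> V E = walk_P (rho_weight \<epsilon> \<theta> V E) (rho_states V)"

end

theory Submission
  imports Defs
begin

(* Let q_t(v) be the probability that the walk on G^rho started at v has not hit rho within t
   steps before leaving V_i, and c = theta eps^4 / (sqrt n - theta eps^4), so that every vertex
   steps to rho with probability c/(1+c). Double counting the edges inside V_i and using q = 1
   off V_i shows that the degree-weighted potential Q_t = sum_{v in V_i} deg(v) q_t(v) satisfies
   Q_{t+1} <= (Q_t + |E(V_i, V - V_i)|) / (1+c). Hence Q_t <= (1+c)^-t n^2 + |E(V_i, V - V_i)| / c,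
   which the boundary bound of the decomposition makes at most 2 eps^2 n^2 for large t. As all
   degrees are at least delta n, Markov's inequality leaves at most delta n / 4 vertices of V_i
   with q_t(v) > 8 eps^2 / delta^2, and the others form V_i'. So C = 8 / delta^2 works. *)

lemma card_less_mult_le_sum:
  fixes f :: "'a \<Rightarrow> real"
  assumes "finite A" and "\<And>x. x \<in> A \<Longrightarrow> 0 \<le> f x"
  shows "a * real (card {x \<in> A. a < f x}) \<le> (\<Sum>x\<in>A. f x)"
proof -
  have "a * real (card {x \<in> A. a < f x}) = (\<Sum>x\<in>{x \<in> A. a < f x}. a)" by simp
  also have "\<dots> \<le> (\<Sum>x\<in>{x \<in> A. a < f x}. f x)" by (rule sum_mono) auto
  also have "\<dots> \<le> (\<Sum>x\<in>A. f x)" using assms by (intro sum_mono2) auto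
  finally show ?thesis .
qed

lemma affine_recurrence_le:
  fixes Q :: "nat \<Rightarrow> real"
  assumes step: "\<And>t. Q (Suc t) \<le> s * Q t + b" and "0 \<le> s" "s < 1" "0 \<le> b"
  shows "Q t \<le> s ^ t * Q 0 + b / (1 - s)"
proof (induction t)
  case 0
  show ?case using assms by simp
next
  case (Suc t)
  have "Q (Suc t) \<le> s * (s ^ t * Q 0 + b / (1 - s)) + b"
    using step[of t] Suc.IH \<open>0 \<le> s\<close> by (meson add_right_mono mult_left_mono order_trans)
  also have "\<dots> = s ^ Suc t * Q 0 + b / (1 - s)"
    using \<open>s < 1\<close> by (simp add: field_simps)
  finally show ?case .
qed

(* A row of total weight 0 sums to 0, since x / 0 = 0. *)
lemma sum_walk_P_le_1:
  assumes "\<And>z. z \<in> S \<Longrightarrow> 0 \<le> w x z"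
  shows "(\<Sum>y\<in>S. walk_P w S x y) \<le> 1"
  unfolding walk_P_def sum_divide_distrib[symmetric] by (simp add: divide_le_eq_1)

lemma walk_P_nonneg:
  assumes "\<And>z. z \<in> S \<Longrightarrow> 0 \<le> w x z" and "y \<in> S"
  shows "0 \<le> walk_P w S x y"
  unfolding walk_P_def using assms by (simp add: sum_nonneg)

lemma hit_within_bounds:
  assumes nonneg: "\<And>x y. x \<in> S \<Longrightarrow> y \<in> S \<Longrightarrow> 0 \<le> P x y"
    and substochastic: "\<And>x. x \<in> S \<Longrightarrow> (\<Sum>y\<in>S. P x y) \<le> 1"
    and "x \<in> S"
  shows "0 \<le> hit_within P S a B t x \<and> hit_within P S a B t x \<le> 1"
  using \<open>x \<in> S\<close>
proof (induction t arbitrary: x)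
  case 0
  show ?case by simp
next
  case (Suc t)
  have "(\<Sum>y\<in>S. P x y * hit_within P S a B t y) \<le> (\<Sum>y\<in>S. P x y)"
    using Suc nonneg by (intro sum_mono) (simp add: mult_left_le)
  moreover have "0 \<le> (\<Sum>y\<in>S. P x y * hit_within P S a B t y)"
    using Suc nonneg by (intro sum_nonneg) simp
  ultimately show ?case using substochastic[OF Suc.prems] by simp
qed

lemma hit_within_le_hit_before:
  assumes "\<And>x y. x \<in> S \<Longrightarrow> y \<in> S \<Longrightarrow> 0 \<le> P x y"
    and "\<And>x. x \<in> S \<Longrightarrow> (\<Sum>y\<in>S. P x y) \<le> 1"
    and "x \<in> S"
  shows "hit_within P S a B t x \<le> hit_before P S a B x"
  unfolding hit_before_def
  using hit_within_bounds[OF assms] by (intro cSUP_upper bdd_aboveI2[where M = 1]) auto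

definition rho_coeff :: "real \<Rightarrow> real \<Rightarrow> nat set \<Rightarrow> real" where
  "rho_coeff \<epsilon> \<theta> V = \<theta> * \<epsilon>^4 / (sqrt (real (card V)) - \<theta> * \<epsilon>^4)"

lemma rho_weight_simps:
  "rho_weight \<epsilon> \<theta> V E (Some u) (Some v) = of_bool (E u v)"
  "rho_weight \<epsilon> \<theta> V E (Some u) None = rho_coeff \<epsilon> \<theta> V * real (deg E u V)"
  "rho_weight \<epsilon> \<theta> V E None (Some v) = rho_coeff \<epsilon> \<theta> V * real (deg E v V)"
  "rho_weight \<epsilon> \<theta> V E None None = 0"
  by (simp_all add: rho_weight_def rho_coeff_def Let_def)

lemma rho_weight_nonneg: "0 \<le> rho_coeff \<epsilon> \<theta> V \<Longrightarrow> 0 \<le> rho_weight \<epsilon> \<theta> V E x y"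
  by (cases x; cases y) (simp_all add: rho_weight_simps)

lemma sum_rho_weight_Some:
  assumes "finite V"
  shows "(\<Sum>z\<in>rho_states V. rho_weight \<epsilon> \<theta> V E (Some v) z)
           = (1 + rho_coeff \<epsilon> \<theta> V) * real (deg E v V)"
proof -
  have "(\<Sum>z\<in>Some ` V. rho_weight \<epsilon> \<theta> V E (Some v) z) = real (deg E v V)"
    using assms by (simp add: sum.reindex deg_def rho_weight_simps Int_def)
  then show ?thesis
    using assms by (simp add: rho_states_def rho_weight_simps algebra_simps)
qed

lemma hit_within_rho_bounds:
  assumes "0 \<le> rho_coeff \<epsilon> \<theta> V" and "x \<in> rho_states V"
  shows "0 \<le> hit_within (rho_P \<epsilon> \<theta> V E) (rho_states V) a B t x
       \<and> hit_within (rho_P \<epsilon> \<theta> V E) (rho_states V) a B t x \<le> 1"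
  using assms unfolding rho_P_def
  by (intro hit_within_bounds walk_P_nonneg sum_walk_P_le_1 rho_weight_nonneg)

lemma hit_within_le_hit_before_rho:
  assumes "0 \<le> rho_coeff \<epsilon> \<theta> V" and "x \<in> rho_states V"
  shows "hit_within (rho_P \<epsilon> \<theta> V E) (rho_states V) a B t x
           \<le> hit_before (rho_P \<epsilon> \<theta> V E) (rho_states V) a B x"
  using assms unfolding rho_P_def
  by (intro hit_within_le_hit_before walk_P_nonneg sum_walk_P_le_1 rho_weight_nonneg)

definition rho_miss :: "real \<Rightarrow> real \<Rightarrow> nat set \<Rightarrow> (nat \<Rightarrow> nat \<Rightarrow> bool) \<Rightarrow> nat set \<Rightarrow> nat \<Rightarrow> nat \<Rightarrow> real" where
  "rho_miss \<epsilon> \<theta> V E U t v =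
     1 - hit_within (rho_P \<epsilon> \<theta> V E) (rho_states V) None (Some ` (V - U)) t (Some v)"

lemma rho_miss_0 [simp]: "rho_miss \<epsilon> \<theta> V E U 0 v = 1"
  by (simp add: rho_miss_def)

lemma rho_miss_outside [simp]: "v \<in> V - U \<Longrightarrow> rho_miss \<epsilon> \<theta> V E U t v = 1"
  by (cases t) (simp_all add: rho_miss_def)

lemma rho_miss_Suc:
  assumes "finite V" and "v \<in> U" and d_pos: "0 < deg E v V" and c_pos: "0 < rho_coeff \<epsilon> \<theta> V"
  shows "real (deg E v V) * rho_miss \<epsilon> \<theta> V E U (Suc t) v
           = (\<Sum>u\<in>{u \<in> V. E v u}. rho_miss \<epsilon> \<theta> V E U t u) / (1 + rho_coeff \<epsilon> \<theta> V)"
proof -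
  define c where "c = rho_coeff \<epsilon> \<theta> V"
  define d where "d = real (deg E v V)"
  define h where "h = hit_within (rho_P \<epsilon> \<theta> V E) (rho_states V) None (Some ` (V - U)) t"
  have row: "rho_P \<epsilon> \<theta> V E (Some v) y = rho_weight \<epsilon> \<theta> V E (Some v) y / ((1 + c) * d)" for y
    unfolding rho_P_def walk_P_def using sum_rho_weight_Some[OF \<open>finite V\<close>] by (simp add: c_def d_def)
  have h_None: "h None = 1"
    unfolding h_def by (cases t) auto
  define X where "X = (\<Sum>u\<in>{u \<in> V. E v u}. h (Some u))"
  have "0 < d" "0 < c" using d_pos c_pos by (simp_all add: c_def d_def)
  have neighbours: "(\<Sum>u\<in>V. rho_P \<epsilon> \<theta> V E (Some v) (Some u) * h (Some u)) = X / ((1 + c) * d)"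
    using \<open>finite V\<close>
    by (simp add: X_def row rho_weight_simps sum_divide_distrib[symmetric] Collect_conj_eq)
  have "hit_within (rho_P \<epsilon> \<theta> V E) (rho_states V) None (Some ` (V - U)) (Suc t) (Some v)
          = (\<Sum>y\<in>rho_states V. rho_P \<epsilon> \<theta> V E (Some v) y * h y)"
    using \<open>v \<in> U\<close> by (simp add: h_def image_iff)
  also have "\<dots> = rho_P \<epsilon> \<theta> V E (Some v) None * h None
                   + (\<Sum>u\<in>V. rho_P \<epsilon> \<theta> V E (Some v) (Some u) * h (Some u))"
    using \<open>finite V\<close> by (simp add: rho_states_def sum.reindex)
  also have "\<dots> = c / (1 + c) + X / ((1 + c) * d)"
    unfolding neighbours using \<open>0 < d\<close> by (simp add: h_None row rho_weight_simps c_def d_def)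
  finally have hit_Suc: "hit_within (rho_P \<epsilon> \<theta> V E) (rho_states V) None (Some ` (V - U)) (Suc t) (Some v)
          = c / (1 + c) + X / ((1 + c) * d)" .
  have "d * rho_miss \<epsilon> \<theta> V E U (Suc t) v = d * (1 - (c / (1 + c) + X / ((1 + c) * d)))"
    unfolding rho_miss_def hit_Suc ..
  also have "\<dots> = (d - X) / (1 + c)"
    using \<open>0 < d\<close> \<open>0 < c\<close> by (simp add: divide_simps) (simp add: algebra_simps)
  also have "d - X = (\<Sum>u\<in>{u \<in> V. E v u}. rho_miss \<epsilon> \<theta> V E U t u)"
    by (simp add: rho_miss_def h_def X_def sum_subtractf d_def deg_def)
  finally show ?thesis by (simp add: c_def d_def)
qed

lemma rho_miss_nonneg:
  assumes "0 \<le> rho_coeff \<epsilon> \<theta> V" and "v \<in> V"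
  shows "0 \<le> rho_miss \<epsilon> \<theta> V E U t v"
  using hit_within_rho_bounds[OF assms(1), of "Some v"] assms(2)
  by (simp add: rho_miss_def rho_states_def)

lemma edges_between_eq_sum_card:
  assumes "finite A" and "finite B"
  shows "edges_between E A B = (\<Sum>a\<in>A. card {b \<in> B. E a b})"
proof -
  have "{(a, b). a \<in> A \<and> b \<in> B \<and> E a b} = (SIGMA a:A. {b \<in> B. E a b})" by auto
  then show ?thesis using assms by (simp add: edges_between_def card_SigmaI)
qed

lemma sum_neighbourhood_sums_le:
  fixes f :: "nat \<Rightarrow> real"
  assumes "simple_graph V E" and "U \<subseteq> V"
    and nonneg: "\<And>u. u \<in> V \<Longrightarrow> 0 \<le> f u" and le_1: "\<And>u. u \<in> V - U \<Longrightarrow> f u \<le> 1"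
  shows "(\<Sum>v\<in>U. \<Sum>u\<in>{u \<in> V. E v u}. f u)
           \<le> (\<Sum>u\<in>U. real (deg E u V) * f u) + real (edges_between E U (V - U))"
proof -
  have "finite V" and sym: "\<And>u v. E u v \<Longrightarrow> E v u"
    using \<open>simple_graph V E\<close> by (simp_all add: simple_graph_def)
  then have "finite U" using \<open>U \<subseteq> V\<close> finite_subset by blast
  have split: "(\<Sum>u\<in>{u \<in> V. E v u}. f u) = (\<Sum>u\<in>{u \<in> U. E v u}. f u) + (\<Sum>u\<in>{u \<in> V - U. E v u}. f u)"
    if "v \<in> U" for v
  proof -
    have "{u \<in> V. E v u} = {u \<in> U. E v u} \<union> {u \<in> V - U. E v u}" using \<open>U \<subseteq> V\<close> by auto
    then show ?thesis using \<open>finite V\<close> \<open>finite U\<close> by (subst sum.union_disjoint[symmetric]) auto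
  qed
  have "(\<Sum>v\<in>U. \<Sum>u\<in>{u \<in> U. E v u}. f u) = (\<Sum>u\<in>U. \<Sum>v\<in>{v \<in> U. E v u}. f u)"
    by (rule sum.swap_restrict[OF \<open>finite U\<close> \<open>finite U\<close>])
  also have "\<dots> = (\<Sum>u\<in>U. real (card {v \<in> U. E u v}) * f u)"
  proof -
    have "{v \<in> U. E v u} = {v \<in> U. E u v}" for u using sym by blast
    then show ?thesis by simp
  qed
  also have "\<dots> \<le> (\<Sum>u\<in>U. real (deg E u V) * f u)"
    unfolding deg_def using \<open>finite V\<close> \<open>U \<subseteq> V\<close> nonneg
    by (intro sum_mono mult_right_mono) (auto intro!: card_mono)
  finally have inside: "(\<Sum>v\<in>U. \<Sum>u\<in>{u \<in> U. E v u}. f u) \<le> (\<Sum>u\<in>U. real (deg E u V) * f u)" .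
  have "(\<Sum>v\<in>U. \<Sum>u\<in>{u \<in> V - U. E v u}. f u) \<le> (\<Sum>v\<in>U. real (card {u \<in> V - U. E v u}))"
    using le_1 by (intro sum_mono order_trans[OF sum_bounded_above[where K = 1]]) auto
  also have "\<dots> = real (edges_between E U (V - U))"
    using \<open>finite U\<close> \<open>finite V\<close> by (simp add: edges_between_eq_sum_card)
  finally have crossing: "(\<Sum>v\<in>U. \<Sum>u\<in>{u \<in> V - U. E v u}. f u) \<le> real (edges_between E U (V - U))" .
  show ?thesis using inside crossing by (simp add: split sum.distrib)
qed

lemma rho_miss_potential_le:
  assumes "simple_graph V E" and "U \<subseteq> V" and deg_pos: "\<And>v. v \<in> V \<Longrightarrow> 0 < deg E v V"
    and c_pos: "0 < rho_coeff \<epsilon> \<theta> V"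
  shows "(\<Sum>v\<in>U. real (deg E v V) * rho_miss \<epsilon> \<theta> V E U t v)
           \<le> (1 / (1 + rho_coeff \<epsilon> \<theta> V)) ^ t * (\<Sum>v\<in>U. real (deg E v V))
              + real (edges_between E U (V - U)) / rho_coeff \<epsilon> \<theta> V"
proof -
  define c where "c = rho_coeff \<epsilon> \<theta> V"
  define s where "s = 1 / (1 + c)"
  define e where "e = real (edges_between E U (V - U))"
  define Q where "Q t = (\<Sum>v\<in>U. real (deg E v V) * rho_miss \<epsilon> \<theta> V E U t v)" for t
  have "finite V" using \<open>simple_graph V E\<close> by (simp add: simple_graph_def)
  have "0 < c" "0 < s" "s < 1" using c_pos by (simp_all add: c_def s_def)
  have "Q (Suc t) \<le> s * Q t + s * e" for t
  proof -
    have "Q (Suc t) = s * (\<Sum>v\<in>U. \<Sum>u\<in>{u \<in> V. E v u}. rho_miss \<epsilon> \<theta> V E U t u)"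
      unfolding Q_def s_def c_def sum_distrib_left using \<open>U \<subseteq> V\<close> \<open>finite V\<close> deg_pos c_pos
      by (intro sum.cong refl, subst rho_miss_Suc) (auto simp: sum_divide_distrib)
    also have "\<dots> \<le> s * (Q t + e)"
      unfolding Q_def e_def using \<open>0 < s\<close> \<open>0 < c\<close> \<open>U \<subseteq> V\<close>
      by (intro mult_left_mono sum_neighbourhood_sums_le[OF \<open>simple_graph V E\<close>] rho_miss_nonneg)
         (auto simp: c_def)
    finally show ?thesis by (simp add: algebra_simps)
  qed
  then have "Q t \<le> s ^ t * Q 0 + s * e / (1 - s)"
    using \<open>0 < s\<close> \<open>s < 1\<close> by (intro affine_recurrence_le) (auto simp: e_def)
  moreover have "1 - s = c * s"
    using \<open>0 < c\<close> by (simp add: s_def field_simps)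
  ultimately show ?thesis
    using \<open>0 < s\<close> by (simp add: Q_def s_def c_def e_def)
qed

lemma le_1_if_powr_le_self:
  fixes x L :: real
  assumes "0 < x" and "1 < L" and "x powr L \<le> x"
  shows "x \<le> 1"
proof (rule ccontr)
  assume "\<not> x \<le> 1"
  then have "x powr 1 < x powr L" using \<open>1 < L\<close> by (simp only: not_le powr_less_cancel_iff)
  then show False using assms by simp
qed

lemma edges_div_rho_coeff_le:
  fixes e :: real and V :: "nat set"
  defines "n \<equiv> real (card V)"
  assumes "0 < \<epsilon>" and "0 < \<theta>" and sqrt_gt: "\<theta> * \<epsilon>^4 < sqrt n"
    and "0 \<le> e" and e_le: "e \<le> \<epsilon>^9 * \<theta>^2 * n powr 1.5"
  shows "e / rho_coeff \<epsilon> \<theta> V \<le> \<epsilon>^5 * \<theta> * n^2"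
proof -
  have "0 < \<theta> * \<epsilon>^4" using \<open>0 < \<epsilon>\<close> \<open>0 < \<theta>\<close> by simp
  with sqrt_gt have "0 < n" by (metis order.strict_trans real_sqrt_gt_0_iff)
  have "e / rho_coeff \<epsilon> \<theta> V = e * (sqrt n - \<theta> * \<epsilon>^4) / (\<theta> * \<epsilon>^4)"
    using \<open>0 < \<theta> * \<epsilon>^4\<close> sqrt_gt by (simp add: rho_coeff_def n_def)
  also have "\<dots> \<le> e * sqrt n / (\<theta> * \<epsilon>^4)"
    using \<open>0 < \<theta> * \<epsilon>^4\<close> \<open>0 \<le> e\<close> by (intro divide_right_mono mult_left_mono) auto
  also have "\<dots> \<le> \<epsilon>^9 * \<theta>^2 * n powr 1.5 * sqrt n / (\<theta> * \<epsilon>^4)"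
    using \<open>0 < \<theta> * \<epsilon>^4\<close> \<open>0 < n\<close> e_le by (intro divide_right_mono mult_right_mono) auto
  also have "\<dots> = \<epsilon>^5 * \<theta> * n^2"
  proof -
    have "n powr 1.5 * sqrt n = n^2"
      using \<open>0 < n\<close> by (simp add: powr_half_sqrt[symmetric] powr_add[symmetric])
    then show ?thesis
      using \<open>0 < \<epsilon>\<close> \<open>0 < \<theta>\<close> by (simp add: field_simps power2_eq_square eval_nat_numeral)
  qed
  finally show ?thesis .
qed

lemma rho_coeff_pos:
  assumes "0 < \<epsilon>" and "0 < \<theta>" and "\<theta> * \<epsilon>^4 < sqrt (real (card V))"
  shows "0 < rho_coeff \<epsilon> \<theta> V"
  using assms unfolding rho_coeff_def by (intro divide_pos_pos) auto

lemma sqrt_card_gt_if_large: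
  assumes "0 < \<epsilon>" and "\<epsilon> \<le> 1" and "0 < \<theta>" and "\<theta> \<le> \<epsilon>"
    and large: "sqrt (real (card V)) > 1 / (\<theta> * \<epsilon>^8)"
  shows "\<theta> * \<epsilon>^4 < sqrt (real (card V))"
proof -
  have "\<theta> * \<epsilon>^4 \<le> 1" and "\<theta> * \<epsilon>^8 \<le> 1"
    using assms(1-4) by (auto intro!: mult_le_one power_le_one)
  moreover have "1 \<le> 1 / (\<theta> * \<epsilon>^8)"
    using \<open>\<theta> * \<epsilon>^8 \<le> 1\<close> \<open>0 < \<epsilon>\<close> \<open>0 < \<theta>\<close> by (simp add: le_divide_eq_1)
  ultimately show ?thesis using large by linarith
qed

lemma rho_miss_potential_small:
  fixes V :: "nat set"
  defines "n \<equiv> real (card V)"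
  assumes "simple_graph V E" and eps: "0 < \<epsilon>" "\<epsilon> \<le> 1" and theta: "0 < \<theta>" "\<theta> \<le> \<epsilon>"
    and large: "sqrt n > 1 / (\<theta> * \<epsilon>^8)"
    and deg_pos: "\<And>v. v \<in> V \<Longrightarrow> 0 < deg E v V"
    and "U \<subseteq> V" and boundary: "real (edges_between E U (V - U)) \<le> \<epsilon>^9 * \<theta>^2 * n powr 1.5"
  shows "\<exists>t. (\<Sum>v\<in>U. real (deg E v V) * rho_miss \<epsilon> \<theta> V E U t v) \<le> 2 * \<epsilon>^2 * n^2"
proof -
  have "finite V" using \<open>simple_graph V E\<close> by (simp add: simple_graph_def)
  have "\<epsilon>^3 * \<theta> \<le> 1"
    using eps theta by (auto intro!: mult_le_one power_le_one)
  have "\<epsilon>^5 * \<theta> = \<epsilon>^2 * (\<epsilon>^3 * \<theta>)"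
    by (simp add: algebra_simps flip: power_add)
  also have "\<dots> \<le> \<epsilon>^2"
    using \<open>\<epsilon>^3 * \<theta> \<le> 1\<close> by (rule mult_left_le) simp
  finally have "\<epsilon>^5 * \<theta> * n^2 \<le> \<epsilon>^2 * n^2"
    by (rule mult_right_mono) simp
  have sqrt_gt: "\<theta> * \<epsilon>^4 < sqrt n"
    using sqrt_card_gt_if_large eps theta large unfolding n_def by blast
  have c_pos: "0 < rho_coeff \<epsilon> \<theta> V"
    using rho_coeff_pos eps theta sqrt_gt unfolding n_def by blast
  obtain t where t: "(1 / (1 + rho_coeff \<epsilon> \<theta> V)) ^ t < \<epsilon>^5 * \<theta>"
    using real_arch_pow_inv[of "\<epsilon>^5 * \<theta>" "1 / (1 + rho_coeff \<epsilon> \<theta> V)"] c_pos eps theta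
    by auto
  have "(\<Sum>v\<in>U. real (deg E v V)) \<le> (\<Sum>v\<in>U. n)"
    unfolding n_def deg_def using \<open>finite V\<close> by (intro sum_mono) (simp add: card_mono)
  also have "\<dots> \<le> n^2"
    using \<open>finite V\<close> \<open>U \<subseteq> V\<close> by (simp add: n_def card_mono power2_eq_square mult_right_mono)
  finally have "(1 / (1 + rho_coeff \<epsilon> \<theta> V)) ^ t * (\<Sum>v\<in>U. real (deg E v V)) \<le> \<epsilon>^5 * \<theta> * n^2"
    using t c_pos eps theta by (intro mult_mono) (auto intro: sum_nonneg)
  moreover have "real (edges_between E U (V - U)) / rho_coeff \<epsilon> \<theta> V \<le> \<epsilon>^5 * \<theta> * n^2"
    using eps theta sqrt_gt boundary unfolding n_def by (intro edges_div_rho_coeff_le) auto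
  ultimately show ?thesis
    using rho_miss_potential_le[OF \<open>simple_graph V E\<close> \<open>U \<subseteq> V\<close> deg_pos c_pos, of t]
      \<open>\<epsilon>^5 * \<theta> * n^2 \<le> \<epsilon>^2 * n^2\<close>
    by (intro exI[of _ t]) linarith
qed

lemma rho_miss_sum_small:
  fixes V :: "nat set"
  defines "n \<equiv> real (card V)"
  assumes "simple_graph V E" and eps: "0 < \<epsilon>" "\<epsilon> \<le> 1" and theta: "0 < \<theta>" "\<theta> \<le> \<epsilon>"
    and large: "sqrt n > 1 / (\<theta> * \<epsilon>^8)"
    and "0 < \<delta>" and min_deg: "\<And>v. v \<in> V \<Longrightarrow> real (deg E v V) \<ge> \<delta> * n"
    and "U \<subseteq> V" and boundary: "real (edges_between E U (V - U)) \<le> \<epsilon>^9 * \<theta>^2 * n powr 1.5"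
  shows "\<exists>t. (\<Sum>v\<in>U. rho_miss \<epsilon> \<theta> V E U t v) \<le> 2 * \<epsilon>^2 * n / \<delta>"
proof -
  have sqrt_gt: "\<theta> * \<epsilon>^4 < sqrt n"
    using sqrt_card_gt_if_large eps theta large unfolding n_def by blast
  then have c_pos: "0 < rho_coeff \<epsilon> \<theta> V"
    using rho_coeff_pos eps theta unfolding n_def by blast
  have "0 < \<theta> * \<epsilon>^4" using eps theta by simp
  with sqrt_gt have "0 < sqrt n" by linarith
  then have "0 < n" by simp
  then have "0 < \<delta> * n" using \<open>0 < \<delta>\<close> by simp
  then have "0 < deg E v V" if "v \<in> V" for v
    using min_deg[OF that] by linarith
  then obtain t where "(\<Sum>v\<in>U. real (deg E v V) * rho_miss \<epsilon> \<theta> V E U t v) \<le> 2 * \<epsilon>^2 * n^2"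
    using rho_miss_potential_small[OF \<open>simple_graph V E\<close> eps theta large[unfolded n_def] _
        \<open>U \<subseteq> V\<close> boundary[unfolded n_def]]
    unfolding n_def by blast
  moreover have "\<delta> * n * (\<Sum>v\<in>U. rho_miss \<epsilon> \<theta> V E U t v)
                   \<le> (\<Sum>v\<in>U. real (deg E v V) * rho_miss \<epsilon> \<theta> V E U t v)"
    unfolding sum_distrib_left using \<open>U \<subseteq> V\<close> min_deg c_pos
    by (intro sum_mono mult_right_mono) (auto intro: rho_miss_nonneg)
  ultimately have "n * (\<delta> * (\<Sum>v\<in>U. rho_miss \<epsilon> \<theta> V E U t v)) \<le> n * (2 * \<epsilon>^2 * n)"
    by (simp add: power2_eq_square algebra_simps)
  then have "\<delta> * (\<Sum>v\<in>U. rho_miss \<epsilon> \<theta> V E U t v) \<le> 2 * \<epsilon>^2 * n"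
    using \<open>0 < n\<close> by simp
  then show ?thesis
    using \<open>0 < \<delta>\<close> by (auto simp: pos_le_divide_eq mult.commute)
qed

lemma rho_hit_before_exit:
  fixes V :: "nat set"
  defines "n \<equiv> real (card V)"
  assumes "simple_graph V E" and eps: "0 < \<epsilon>" "\<epsilon> \<le> 1" and theta: "0 < \<theta>" "\<theta> \<le> \<epsilon>"
    and large: "sqrt n > 1 / (\<theta> * \<epsilon>^8)"
    and "0 < \<delta>" and "\<delta> \<le> 1" and min_deg: "\<And>v. v \<in> V \<Longrightarrow> real (deg E v V) \<ge> \<delta> * n"
    and "U \<subseteq> V" and U_large: "real (card U) \<ge> \<delta> * n / 2"
    and boundary: "real (edges_between E U (V - U)) \<le> \<epsilon>^9 * \<theta>^2 * n powr 1.5"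
  shows "\<exists>V' \<subseteq> U. real (card V') \<ge> \<delta>^4 * n / 80 \<and>
           (\<forall>v\<in>V'. hit_before (rho_P \<epsilon> \<theta> V E) (rho_states V) None (Some ` (V - U)) (Some v)
                      \<ge> 1 - 8 / \<delta>^2 * \<epsilon>^2)"
proof -
  obtain t where small: "(\<Sum>v\<in>U. rho_miss \<epsilon> \<theta> V E U t v) \<le> 2 * \<epsilon>^2 * n / \<delta>"
    using rho_miss_sum_small[OF \<open>simple_graph V E\<close> eps theta large[unfolded n_def] \<open>0 < \<delta>\<close>
        min_deg[unfolded n_def] \<open>U \<subseteq> V\<close> boundary[unfolded n_def]]
    unfolding n_def by blast
  define a where "a = 8 / \<delta>^2 * \<epsilon>^2"
  define good where "good = {v \<in> U. rho_miss \<epsilon> \<theta> V E U t v \<le> a}"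
  define bad where "bad = {v \<in> U. a < rho_miss \<epsilon> \<theta> V E U t v}"
  have "finite V" using \<open>simple_graph V E\<close> by (simp add: simple_graph_def)
  then have "finite U" using \<open>U \<subseteq> V\<close> finite_subset by blast
  have c_nonneg: "0 \<le> rho_coeff \<epsilon> \<theta> V"
    using rho_coeff_pos sqrt_card_gt_if_large eps theta large unfolding n_def by (meson less_imp_le)
  have "a * real (card bad) \<le> 2 * \<epsilon>^2 * n / \<delta>"
    unfolding bad_def using \<open>finite U\<close> \<open>U \<subseteq> V\<close> rho_miss_nonneg[OF c_nonneg] small
    by (intro order_trans[OF card_less_mult_le_sum]) auto
  then have card_bad: "real (card bad) \<le> \<delta> * n / 4"
    using \<open>0 < \<delta>\<close> \<open>0 < \<epsilon>\<close> by (simp add: a_def field_simps power2_eq_square)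
  have "card U = card good + card bad"
    unfolding good_def bad_def using \<open>finite U\<close>
    by (subst card_Un_disjoint[symmetric]) (auto intro: arg_cong[where f = card])
  moreover have "\<delta>^4 * n \<le> \<delta> * n"
    using power_decreasing[of 1 4 \<delta>] \<open>0 < \<delta>\<close> \<open>\<delta> \<le> 1\<close> by (intro mult_right_mono) (simp_all add: n_def)
  moreover have "0 \<le> \<delta> * n" using \<open>0 < \<delta>\<close> by (simp add: n_def)
  ultimately have "real (card good) \<ge> \<delta>^4 * n / 80"
    using U_large card_bad by linarith
  moreover have "hit_before (rho_P \<epsilon> \<theta> V E) (rho_states V) None (Some ` (V - U)) (Some v) \<ge> 1 - a"
    if "v \<in> good" for v
  proof -
    have "1 - a \<le> 1 - rho_miss \<epsilon> \<theta> V E U t v" using that by (simp add: good_def)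
    also have "\<dots> \<le> hit_before (rho_P \<epsilon> \<theta> V E) (rho_states V) None (Some ` (V - U)) (Some v)"
      using hit_within_le_hit_before_rho[OF c_nonneg, where x = "Some v"] that \<open>U \<subseteq> V\<close>
      by (auto simp: rho_miss_def good_def rho_states_def)
    finally show ?thesis .
  qed
  ultimately show ?thesis
    by (intro exI[of _ good]) (auto simp: good_def a_def)
qed

lemma good_decompositionD:
  assumes "good_decomposition \<epsilon> \<delta> \<beta> \<theta> V E k Vs" and "i < k" and "0 < \<delta>" and "0 < \<epsilon>"
  shows "0 < \<theta>" and "\<theta> \<le> \<epsilon>" and "\<epsilon> \<le> 1" and "Vs i \<subseteq> V"
    and "real (card (Vs i)) \<ge> \<delta> * real (card V) / 2"
    and "real (edges_between E (Vs i) (V - Vs i)) \<le> \<epsilon>^9 * \<theta>^2 * \<beta>"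
proof -
  define L where "L = 11 * 2 powr (2 / \<delta>)"
  have "\<epsilon> powr L \<le> \<theta>" and "\<theta> \<le> \<epsilon>" and "(\<Union>i<k. Vs i) = V"
    using assms(1) unfolding good_decomposition_def Let_def L_def by auto
  then show "0 < \<theta>" and "\<theta> \<le> \<epsilon>" and "Vs i \<subseteq> V"
    using \<open>0 < \<epsilon>\<close> \<open>i < k\<close> by (auto intro: less_le_trans[of 0 "\<epsilon> powr L"])
  have "1 \<le> 2 powr (2 / \<delta>)" using \<open>0 < \<delta>\<close> by (intro ge_one_powr_ge_zero) auto
  then have "1 < L" by (simp add: L_def)
  then show "\<epsilon> \<le> 1"
    using le_1_if_powr_le_self \<open>0 < \<epsilon>\<close> \<open>\<epsilon> powr L \<le> \<theta>\<close> \<open>\<theta> \<le> \<epsilon>\<close> by fastforce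
  show "real (card (Vs i)) \<ge> \<delta> * real (card V) / 2"
    and "real (edges_between E (Vs i) (V - Vs i)) \<le> \<epsilon>^9 * \<theta>^2 * \<beta>"
    using assms(1,2) unfolding good_decomposition_def Let_def by auto
qed

theorem claim3p6:
  fixes \<delta> :: real
  assumes "0 < \<delta>" and "\<delta> \<le> 1"
  shows "\<exists>C::real. \<forall>(\<epsilon>::real) (\<theta>::real) (V::nat set) (E::nat \<Rightarrow> nat \<Rightarrow> bool) (k::nat) (Vs::nat \<Rightarrow> nat set).
     \<epsilon> > 0 \<and> simple_graph V E \<and> connected_graph V E \<and>
     (\<forall>v\<in>V. real (deg E v V) \<ge> \<delta> * real (card V)) \<and>
     good_decomposition \<epsilon> \<delta> (real (card V) powr 1.5) \<theta> V E k Vs \<and>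
     sqrt (real (card V)) > 1 / (\<theta> * \<epsilon>^8)
     \<longrightarrow> (\<forall>i<k. \<exists>V' \<subseteq> Vs i. real (card V') \<ge> \<delta>^4 * real (card V) / 80 \<and>
            (\<forall>v\<in>V'. hit_before (rho_P \<epsilon> \<theta> V E) (rho_states V) None (Some ` (V - Vs i)) (Some v)
                       \<ge> 1 - C * \<epsilon>^2))"
proof (intro exI[of _ "8 / \<delta>^2"] allI impI, elim conjE)
  fix \<epsilon> \<theta> :: real and V :: "nat set" and E k Vs i
  assume "0 < \<epsilon>" and "simple_graph V E" and min_deg: "\<forall>v\<in>V. real (deg E v V) \<ge> \<delta> * real (card V)"
    and decomposition: "good_decomposition \<epsilon> \<delta> (real (card V) powr 1.5) \<theta> V E k Vs"
    and large: "sqrt (real (card V)) > 1 / (\<theta> * \<epsilon>^8)" and "i < k"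
  show "\<exists>V' \<subseteq> Vs i. real (card V') \<ge> \<delta>^4 * real (card V) / 80 \<and>
          (\<forall>v\<in>V'. hit_before (rho_P \<epsilon> \<theta> V E) (rho_states V) None (Some ` (V - Vs i)) (Some v)
                     \<ge> 1 - 8 / \<delta>^2 * \<epsilon>^2)"
    using good_decompositionD[OF decomposition \<open>i < k\<close> \<open>0 < \<delta>\<close> \<open>0 < \<epsilon>\<close>]
    by (intro rho_hit_before_exit) (use assms \<open>0 < \<epsilon>\<close> \<open>simple_graph V E\<close> min_deg large in auto)
qed

end
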